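(* Let $\alpha$ generate an infinite cyclic discrete group $A=\langle\alpha\rangle$ and let $M$ be a polycontractable LC $A$-module. Then the map $x\mapsto \alpha x-x$ is an automorphism of the topological $A$-module $M$ (a bijective continuous homomorphism with continuous inverse).
   Context: An LC $A$-module is an LCA group with a continuous action of $A$ by topological automorphisms. Contractable: some element of $A$ acts as a contracting automorphism ($a^nx\to0$ as $n\to+\infty$ for all $x$). Polycontractable: a finite topological direct sum of closed contractable submodules; for $A=\langle\alpha\rangle$ this means a direct sum of a closed submodule contracted by $\alpha$ and one contracted by $\alpha^{-1}$. *)

theory Defs
  imports "HOL-Analysis.Analysis"
begin

text \<open>An LCA group: a Hausdorff, locally compact abelian topological group.
  We model it by a type of class topological_ab_group_add and t2_space
  whose (euclidean) topology is locally compact.\<close>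

definition LCA_group :: "'a::{topological_ab_group_add, t2_space} itself \<Rightarrow> bool" where
  "LCA_group _ \<longleftrightarrow> locally_compact_space (euclidean :: 'a topology)"

text \<open>An LC module over the infinite cyclic group generated by alpha is given
  by one such automorphism alpha (the generator acts by alpha, n by alpha^n).\<close>

definition top_group_aut :: "('a::topological_ab_group_add \<Rightarrow> 'a) \<Rightarrow> bool" where
  "top_group_aut f \<longleftrightarrow> (\<forall>x y. f (x + y) = f x + f y) \<and> (\<exists>g. homeomorphism UNIV UNIV f g)"

text \<open>Closed submodule: closed subgroup invariant under the action of the
  cyclic group, i.e. alpha maps it onto itself.\<close>

definition closed_submodule :: "('a::topological_ab_group_add \<Rightarrow> 'a) \<Rightarrow> 'a set \<Rightarrow> bool" where
  "closed_submodule \<alpha> N \<longleftrightarrow> closed N \<and> 0 \<in> N \<and> (\<forall>x\<in>N. \<forall>y\<in>N. x - y \<in> N) \<and> \<alpha> ` N = N"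

definition contracted_by :: "('a::topological_ab_group_add \<Rightarrow> 'a) \<Rightarrow> 'a set \<Rightarrow> bool" where
  "contracted_by f N \<longleftrightarrow> (\<forall>x\<in>N. (\<lambda>n. (f ^^ n) x) \<longlonglongrightarrow> 0)"

text \<open>Topological direct sum: trivial intersection and
  every element decomposes as a sum via continuous projections.\<close>

definition polycontractable :: "('a::topological_ab_group_add \<Rightarrow> 'a) \<Rightarrow> bool" where
  "polycontractable \<alpha> \<longleftrightarrow>
     (\<exists>M1 M2 p1 p2.
        closed_submodule \<alpha> M1 \<and> closed_submodule \<alpha> M2 \<and>
        contracted_by \<alpha> M1 \<and> contracted_by (inv \<alpha>) M2 \<and>
        M1 \<inter> M2 = {0} \<and>
        continuous_on UNIV p1 \<and> continuous_on UNIV p2 \<and>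
        (\<forall>x. p1 x \<in> M1 \<and> p2 x \<in> M2 \<and> x = p1 x + p2 x))"

end

theory Submission
  imports Defs
begin

text \<open>
  Let \<open>N\<close> be a closed subgroup of a locally compact group on which an automorphism \<open>\<beta>\<close>
  contracts. A Baire category argument makes the contraction uniform on compact subsets of \<open>N\<close>,
  so for a compact neighbourhood \<open>U\<close> of \<open>0\<close> in \<open>N\<close> and a large \<open>m\<close> the affine maps
  \<open>w \<mapsto> z + \<beta>\<^sup>m w\<close> with small \<open>z\<close> keep \<open>U\<close> invariant; along such an orbit \<open>\<beta> - 1\<close> converges
  to any prescribed small \<open>y\<close>, and compactness of \<open>(\<beta> - 1) U\<close> solves \<open>\<beta> x - x = y\<close> in \<open>U\<close>.
  Conjugating with powers of \<open>\<beta>\<close> solves it for all \<open>y \<in> N\<close>, uniquely since a contraction has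
  no nonzero fixed point. The inverse of \<open>\<beta> - 1\<close> is additive and, near \<open>0\<close>, the inverse of a
  continuous injection of the compact set \<open>U\<close>, hence continuous.
  Applied to \<open>\<alpha>\<close> on \<open>M1\<close> and to \<open>\<alpha>\<inverse>\<close> on \<open>M2\<close> (using \<open>\<alpha> y - y = -(\<alpha>\<inverse> - 1)(\<alpha> y)\<close>), this
  inverts \<open>\<alpha> - 1\<close> continuously on both summands, and the continuous projections glue the inverses.
\<close>

lemma zero_nhd_binop:
  fixes W :: "'a::topological_ab_group_add set"
  assumes "open W" "0 \<in> W" "continuous_on UNIV f" "f (0, 0) = (0::'a)"
  obtains V where "open V" "0 \<in> V" "\<And>a b. a \<in> V \<Longrightarrow> b \<in> V \<Longrightarrow> f (a, b) \<in> W"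
proof -
  have "open (f -` W)" "(0, 0) \<in> f -` W"
    using assms by (auto intro: open_vimage)
  then obtain A B where "open A" "open B" "0 \<in> A" "0 \<in> B" "A \<times> B \<subseteq> f -` W"
    by (metis open_prod_elim mem_Times_iff fst_conv snd_conv)
  then show ?thesis
    by (intro that[of "A \<inter> B"]) auto
qed

lemma zero_nhd_add:
  fixes W :: "'a::topological_ab_group_add set"
  assumes "open W" "0 \<in> W"
  obtains V where "open V" "0 \<in> V" "\<And>a b. a \<in> V \<Longrightarrow> b \<in> V \<Longrightarrow> a + b \<in> W"
  by (rule zero_nhd_binop[OF assms, of "\<lambda>p. fst p + snd p"])
    (simp_all add: continuous_on_add continuous_on_fst continuous_on_snd)

lemma zero_nhd_diff:
  fixes W :: "'a::topological_ab_group_add set"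
  assumes "open W" "0 \<in> W"
  obtains V where "open V" "0 \<in> V" "\<And>a b. a \<in> V \<Longrightarrow> b \<in> V \<Longrightarrow> a - b \<in> W"
  by (rule zero_nhd_binop[OF assms, of "\<lambda>p. fst p - snd p"])
    (simp_all add: continuous_on_diff continuous_on_fst continuous_on_snd)

lemma closure_zero_nhd_subset_sums:
  fixes V :: "'a::topological_ab_group_add set"
  assumes "open V" "0 \<in> V" "x \<in> closure V"
  shows "\<exists>a\<in>V. \<exists>b\<in>V. x = a + b"
proof -
  have "open ((\<lambda>w. x - w) -` V)"
    using assms(1) by (intro open_vimage continuous_intros)
  moreover have "x \<in> (\<lambda>w. x - w) -` V"
    using assms(2) by simp
  ultimately obtain b where "b \<in> V" "x - b \<in> V"
    using assms(3) unfolding closure_iff_nhds_not_empty by blast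
  then show ?thesis
    by (metis diff_add_cancel)
qed

lemma Hausdorff_space_euclidean_t2: "Hausdorff_space (euclidean :: 'a::t2_space topology)"
  unfolding Hausdorff_space_def disjnt_def by (simp, meson hausdorff)

lemma continuous_on_subgroup_if_additive:
  fixes f :: "'a::topological_ab_group_add \<Rightarrow> 'b::topological_ab_group_add"
  assumes N: "0 \<in> N" "\<And>x y. x \<in> N \<Longrightarrow> y \<in> N \<Longrightarrow> x - y \<in> N"
    and f_diff: "\<And>x y. x \<in> N \<Longrightarrow> y \<in> N \<Longrightarrow> f (x - y) = f x - f y"
    and U: "open U" "0 \<in> U" "continuous_on (U \<inter> N) f"
  shows "continuous_on N f"
  unfolding continuous_on_topological
proof (intro ballI allI impI)
  fix y0 B assume y0: "y0 \<in> N" and B: "open B" "f y0 \<in> B"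
  have "f 0 = 0"
    using f_diff[OF N(1) N(1)] by simp
  then have "f 0 \<in> (\<lambda>w. w + f y0) -` B"
    using B(2) by simp
  moreover have "open ((\<lambda>w. w + f y0) -` B)"
    using B(1) by (intro open_vimage continuous_intros)
  ultimately obtain A where A: "open A" "0 \<in> A" "\<And>y. y \<in> U \<inter> N \<Longrightarrow> y \<in> A \<Longrightarrow> f y + f y0 \<in> B"
    using U N(1) unfolding continuous_on_topological by (metis IntI vimage_eq)
  have "open ((\<lambda>y. y - y0) -` (A \<inter> U))"
    using A(1) U(1) by (intro open_vimage open_Int continuous_intros)
  moreover have "y0 \<in> (\<lambda>y. y - y0) -` (A \<inter> U)"
    using A(2) U(2) by simp
  moreover have "f y \<in> B" if "y \<in> N" "y - y0 \<in> A \<inter> U" for y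
    using A(3)[of "y - y0"] N(2)[OF that(1) y0] that f_diff[OF that(1) y0] by auto
  ultimately show "\<exists>A. open A \<and> y0 \<in> A \<and> (\<forall>y\<in>N. y \<in> A \<longrightarrow> f y \<in> B)"
    by blast
qed

lemma homeomorphism_if_right_inverse:
  fixes \<phi> :: "'a::topological_ab_group_add \<Rightarrow> 'b::topological_ab_group_add"
  assumes "\<And>x y. \<phi> (x - y) = \<phi> x - \<phi> y" "\<And>x. \<phi> x = 0 \<Longrightarrow> x = 0"
    and "continuous_on UNIV \<phi>" "continuous_on UNIV g" "\<And>y. \<phi> (g y) = y"
  shows "homeomorphism UNIV UNIV \<phi> g"
proof (rule homeomorphismI)
  fix x
  have "\<phi> (g (\<phi> x) - x) = 0"
    using assms(1,5) by simp
  then show "g (\<phi> x) = x"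
    using assms(2) by fastforce
qed (use assms in auto)

lemma fixed_point_of_direct_sum:
  fixes \<alpha> :: "'a::ab_group_add \<Rightarrow> 'a"
  assumes "\<And>x y. \<alpha> (x + y) = \<alpha> x + \<alpha> y"
    and "\<And>x y. x \<in> M1 \<Longrightarrow> y \<in> M1 \<Longrightarrow> x - y \<in> M1" "\<alpha> ` M1 \<subseteq> M1"
    and "\<And>x y. x \<in> M2 \<Longrightarrow> y \<in> M2 \<Longrightarrow> x - y \<in> M2" "\<alpha> ` M2 \<subseteq> M2"
    and "M1 \<inter> M2 = {0}"
    and "\<And>x. x \<in> M1 \<Longrightarrow> \<alpha> x = x \<Longrightarrow> x = 0" "\<And>x. x \<in> M2 \<Longrightarrow> \<alpha> x = x \<Longrightarrow> x = 0"
    and "a \<in> M1" "b \<in> M2" "\<alpha> (a + b) = a + b"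
  shows "a + b = 0"
proof -
  have "\<alpha> a - a = b - \<alpha> b"
    using assms(1,11) by (simp add: algebra_simps)
  moreover have "\<alpha> a - a \<in> M1" "b - \<alpha> b \<in> M2"
    using assms(2-5,9,10) by blast+
  ultimately have "\<alpha> a = a" "\<alpha> b = b"
    using assms(6) by (metis IntI eq_iff_diff_eq_0 singletonD)+
  then have "a = 0" "b = 0"
    using assms(7-10) by blast+
  then show ?thesis
    by simp
qed

lemma homeomorphism_minus_id_of_direct_sum:
  fixes \<alpha> :: "'a::topological_ab_group_add \<Rightarrow> 'a"
  assumes add: "\<And>x y. \<alpha> (x + y) = \<alpha> x + \<alpha> y" and cont: "continuous_on UNIV \<alpha>"
    and M: "closed_submodule \<alpha> M1" "closed_submodule \<alpha> M2" "M1 \<inter> M2 = {0}"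
    and fixed: "\<And>x. x \<in> M1 \<Longrightarrow> \<alpha> x = x \<Longrightarrow> x = 0" "\<And>x. x \<in> M2 \<Longrightarrow> \<alpha> x = x \<Longrightarrow> x = 0"
    and p: "continuous_on UNIV p1" "continuous_on UNIV p2"
      "\<forall>x. p1 x \<in> M1 \<and> p2 x \<in> M2 \<and> x = p1 x + p2 x"
    and \<psi>1: "continuous_on M1 \<psi>1" "\<And>y. y \<in> M1 \<Longrightarrow> \<alpha> (\<psi>1 y) - \<psi>1 y = y"
    and \<psi>2: "continuous_on M2 \<psi>2" "\<And>y. y \<in> M2 \<Longrightarrow> \<alpha> (\<psi>2 y) - \<psi>2 y = y"
  shows "homeomorphism UNIV UNIV (\<lambda>x. \<alpha> x - x) (\<lambda>y. \<psi>1 (p1 y) + \<psi>2 (p2 y))"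
proof (rule homeomorphism_if_right_inverse)
  have M1: "\<And>x y. x \<in> M1 \<Longrightarrow> y \<in> M1 \<Longrightarrow> x - y \<in> M1" "\<alpha> ` M1 \<subseteq> M1"
    and M2: "\<And>x y. x \<in> M2 \<Longrightarrow> y \<in> M2 \<Longrightarrow> x - y \<in> M2" "\<alpha> ` M2 \<subseteq> M2"
    using M(1,2) by (auto simp: closed_submodule_def)
  have dec: "p1 x \<in> M1" "p2 x \<in> M2" "p1 x + p2 x = x" for x
    using p(3) by auto
  show "\<alpha> (x - y) - (x - y) = (\<alpha> x - x) - (\<alpha> y - y)" for x y
    using add[of "x - y" y] by (simp add: algebra_simps)
  show "x = 0" if "\<alpha> x - x = 0" for x
  proof -
    have "\<alpha> (p1 x + p2 x) = p1 x + p2 x"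
      using that by (simp add: dec(3))
    with add M1 M2 M(3) fixed dec(1,2) have "p1 x + p2 x = 0"
      by (rule fixed_point_of_direct_sum)
    then show ?thesis
      by (simp add: dec(3))
  qed
  show "continuous_on UNIV (\<lambda>x. \<alpha> x - x)"
    by (intro continuous_intros cont)
  show "continuous_on UNIV (\<lambda>y. \<psi>1 (p1 y) + \<psi>2 (p2 y))"
    using dec(1,2) by (intro continuous_on_add continuous_on_compose2[OF \<psi>1(1) p(1)]
        continuous_on_compose2[OF \<psi>2(1) p(2)]) auto
  show "\<alpha> (\<psi>1 (p1 y) + \<psi>2 (p2 y)) - (\<psi>1 (p1 y) + \<psi>2 (p2 y)) = y" for y
    using \<psi>1(2)[OF dec(1)] \<psi>2(2)[OF dec(2)] dec(3)[of y] by (simp add: add algebra_simps)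
qed

locale contracted_subgroup =
  fixes \<beta> \<gamma> :: "'a::{topological_ab_group_add, t2_space} \<Rightarrow> 'a" and N :: "'a set"
  assumes beta_add: "\<And>x y. \<beta> (x + y) = \<beta> x + \<beta> y"
    and homeomorphism_beta: "homeomorphism UNIV UNIV \<beta> \<gamma>"
    and closed_N: "closed N" and zero_in_N: "0 \<in> N"
    and diff_in_N: "\<And>x y. x \<in> N \<Longrightarrow> y \<in> N \<Longrightarrow> x - y \<in> N"
    and beta_image_N: "\<beta> ` N = N"
    and contracts: "\<And>x. x \<in> N \<Longrightarrow> (\<lambda>n. (\<beta> ^^ n) x) \<longlonglongrightarrow> 0"
    and locally_compact: "locally_compact_space (euclidean :: 'a topology)"
begin

lemma continuous_beta: "continuous_on UNIV \<beta>"
  and beta_gamma [simp]: "\<beta> (\<gamma> y) = y"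
  and gamma_beta [simp]: "\<gamma> (\<beta> x) = x"
  using homeomorphism_beta unfolding homeomorphism_def by auto

lemma beta_diff: "\<beta> (x - y) = \<beta> x - \<beta> y"
  using beta_add[of "x - y" y] by (simp add: algebra_simps)

lemma beta_0 [simp]: "\<beta> 0 = 0"
  using beta_diff[of 0 0] by simp

lemma beta_minus: "\<beta> (- x) = - \<beta> x"
  using beta_diff[of 0 x] by simp

lemma gamma_add: "\<gamma> (x + y) = \<gamma> x + \<gamma> y"
  by (metis beta_add beta_gamma gamma_beta)

lemma gamma_diff: "\<gamma> (x - y) = \<gamma> x - \<gamma> y"
  by (metis beta_diff beta_gamma gamma_beta)

lemma minus_in_N: "x \<in> N \<Longrightarrow> - x \<in> N"
  using diff_in_N[OF zero_in_N] by fastforce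

lemma add_in_N: "x \<in> N \<Longrightarrow> y \<in> N \<Longrightarrow> x + y \<in> N"
  using diff_in_N[of x "- y"] minus_in_N by simp

lemma sum_in_N: "(\<And>r. r \<in> A \<Longrightarrow> f r \<in> N) \<Longrightarrow> sum f A \<in> N"
  by (induction A rule: infinite_finite_induct) (auto intro: add_in_N zero_in_N)

lemma beta_in_N: "x \<in> N \<Longrightarrow> \<beta> x \<in> N"
  using beta_image_N by blast

lemma gamma_in_N: "x \<in> N \<Longrightarrow> \<gamma> x \<in> N"
  using beta_image_N by (metis gamma_beta imageE)

lemma beta_pow_diff: "(\<beta> ^^ n) (x - y) = (\<beta> ^^ n) x - (\<beta> ^^ n) y"
  by (induction n) (auto simp: beta_diff)

lemma beta_pow_0 [simp]: "(\<beta> ^^ n) 0 = 0"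
  using beta_pow_diff[of n 0 0] by simp

lemma beta_pow_add: "(\<beta> ^^ n) (x + y) = (\<beta> ^^ n) x + (\<beta> ^^ n) y"
  by (induction n) (auto simp: beta_add)

lemma beta_pow_in_N: "x \<in> N \<Longrightarrow> (\<beta> ^^ n) x \<in> N"
  by (induction n) (auto simp: beta_in_N)

lemma continuous_on_beta_pow: "continuous_on UNIV (\<beta> ^^ n)"
  by (induction n) (auto intro: continuous_on_id continuous_on_compose[of _ _ \<beta>, unfolded comp_def]
      continuous_on_subset[OF continuous_beta])

lemma gamma_pow_diff: "(\<gamma> ^^ n) (x - y) = (\<gamma> ^^ n) x - (\<gamma> ^^ n) y"
  by (induction n) (auto simp: gamma_diff)

lemma gamma_pow_in_N: "x \<in> N \<Longrightarrow> (\<gamma> ^^ n) x \<in> N"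
  by (induction n) (auto simp: gamma_in_N)

lemma gamma_pow_beta_pow [simp]: "(\<gamma> ^^ n) ((\<beta> ^^ n) x) = x"
  by (induction n arbitrary: x) (simp_all add: funpow_swap1)

lemma gamma_pow_beta: "(\<gamma> ^^ n) (\<beta> x) = \<beta> ((\<gamma> ^^ n) x)"
  by (induction n) simp_all

lemma fixed_point_eq_0:
  assumes "x \<in> N" "\<beta> x = x"
  shows "x = 0"
proof -
  have "(\<beta> ^^ n) x = x" for n
    by (induction n) (simp_all add: assms(2))
  then show ?thesis
    using contracts[OF assms(1)] by (simp add: LIMSEQ_const_iff)
qed

lemma eventually_beta_pow_in_nhd:
  "x \<in> N \<Longrightarrow> open V \<Longrightarrow> 0 \<in> V \<Longrightarrow> eventually (\<lambda>n. (\<beta> ^^ n) x \<in> V) sequentially"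
  using contracts topological_tendstoD by blast

lemma open_piece_eventually_in_closure:
  assumes V: "open V" "0 \<in> V"
  obtains k Q x0 where "open Q" "x0 \<in> N" "x0 \<in> Q"
    "\<And>q n. q \<in> N \<Longrightarrow> q \<in> Q \<Longrightarrow> k \<le> n \<Longrightarrow> (\<beta> ^^ n) q \<in> closure V"
proof -
  define F where "F k = N \<inter> (\<Inter>n\<in>{k..}. (\<beta> ^^ n) -` closure V)" for k
  define X where "X = top_of_set N"
  have closedin_F: "closedin X (F k)" for k
    unfolding X_def F_def
    by (intro closed_subset Int_lower1 closed_Int closed_INT ballI closed_vimage closed_closure
        continuous_on_beta_pow closed_N)
  have "x \<in> \<Union>(range F)" if x: "x \<in> N" for x
  proof -
    obtain k where "\<forall>n\<ge>k. (\<beta> ^^ n) x \<in> V"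
      using eventually_beta_pow_in_nhd[OF x V] unfolding eventually_sequentially by blast
    then show ?thesis
      using x closure_subset by (auto simp: F_def)
  qed
  then have "\<Union>(range F) = topspace X"
    by (auto simp: X_def F_def)
  then have "X interior_of \<Union>(range F) \<noteq> {}"
    using zero_in_N interior_of_topspace[of X] by (metis X_def empty_iff topspace_euclidean_subtopology)
  moreover have "locally_compact_space X \<and> regular_space X"
    using locally_compact_space_closed_subset[OF locally_compact] closed_N
      Hausdorff_space_subtopology[OF Hausdorff_space_euclidean_t2] locally_compact_Hausdorff_or_regular
    by (auto simp: X_def)
  ultimately obtain k where "X interior_of F k \<noteq> {}"
    using Baire_category_alt[of X "range F"] closedin_F countable_image[of UNIV F] by blast
  then obtain x0 T where "openin X T" "x0 \<in> T" "T \<subseteq> F k"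
    unfolding interior_of_def by blast
  then obtain Q where "open Q" "T = N \<inter> Q"
    unfolding X_def openin_open by blast
  then show ?thesis
    using that[of Q x0 k] \<open>x0 \<in> T\<close> \<open>T \<subseteq> F k\<close> by (auto simp: F_def)
qed

lemma uniformly_contracted_on_compact:
  assumes W: "open W" "0 \<in> W" and S: "compact S" "S \<subseteq> N"
  shows "eventually (\<lambda>n. (\<beta> ^^ n) ` S \<subseteq> W) sequentially"
proof -
  obtain W1 where W1: "open W1" "0 \<in> W1" "\<And>a b. a \<in> W1 \<Longrightarrow> b \<in> W1 \<Longrightarrow> a + b \<in> W"
    using zero_nhd_add[OF W] by blast
  obtain W2 where W2: "open W2" "0 \<in> W2" "\<And>a b. a \<in> W2 \<Longrightarrow> b \<in> W2 \<Longrightarrow> a - b \<in> W1"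
    using zero_nhd_diff[OF W1(1,2)] by blast
  obtain V0 where V0: "open V0" "0 \<in> V0" "\<And>a b. a \<in> V0 \<Longrightarrow> b \<in> V0 \<Longrightarrow> a + b \<in> W2"
    using zero_nhd_add[OF W2(1,2)] by blast
  define V where "V = V0 \<inter> W1"
  have V: "open V" "0 \<in> V"
    using V0 W1 by (auto simp: V_def)
  have closure_V: "closure V \<subseteq> W2"
  proof
    fix z assume "z \<in> closure V"
    then obtain a b where "a \<in> V" "b \<in> V" "z = a + b"
      using closure_zero_nhd_subset_sums[OF V] by blast
    then show "z \<in> W2"
      using V0(3) by (simp add: V_def)
  qed
  obtain k Q x0 where Q: "open Q" "x0 \<in> N" "x0 \<in> Q"
    and piece: "\<And>q n. q \<in> N \<Longrightarrow> q \<in> Q \<Longrightarrow> k \<le> n \<Longrightarrow> (\<beta> ^^ n) q \<in> closure V"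
    using open_piece_eventually_in_closure[OF V] by metis
  \<comment> \<open>Every point of \<open>S\<close> is a difference \<open>q - x0 + c\<close> with \<open>q \<in> N \<inter> Q\<close> and \<open>c\<close> from a finite set.\<close>
  have open_translate: "open ((\<lambda>w. w + x0 - c) -` Q)" for c
    using Q(1) by (intro open_vimage continuous_intros)
  have "S \<subseteq> (\<Union>c\<in>S. (\<lambda>w. w + x0 - c) -` Q)"
    using Q(3) by auto
  then obtain C where C: "C \<subseteq> S" "finite C" "S \<subseteq> (\<Union>c\<in>C. (\<lambda>w. w + x0 - c) -` Q)"
    by (rule compactE_image[OF S(1) open_translate])
  have "eventually (\<lambda>n. \<forall>c\<in>C. (\<beta> ^^ n) c \<in> V) sequentially"
    using C(1,2) S(2) by (intro eventually_ball_finite ballI eventually_beta_pow_in_nhd V) auto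
  then have "eventually (\<lambda>n. (\<forall>c\<in>C. (\<beta> ^^ n) c \<in> V) \<and> k \<le> n) sequentially"
    using eventually_ge_at_top eventually_conj by blast
  then show ?thesis
  proof (rule eventually_mono, safe)
    fix n x assume n: "\<forall>c\<in>C. (\<beta> ^^ n) c \<in> V" "k \<le> n" and "x \<in> S"
    then obtain c where c: "c \<in> C" "x + x0 - c \<in> Q"
      using C(3) by blast
    have "x + x0 - c \<in> N"
      using c(1) C(1) S(2) \<open>x \<in> S\<close> Q(2) by (intro diff_in_N add_in_N) auto
    then have "(\<beta> ^^ n) (x + x0 - c) \<in> W2" "(\<beta> ^^ n) x0 \<in> W2"
      using closure_V piece[OF _ c(2) n(2)] piece[OF Q(2,3) n(2)] by blast+
    then have "(\<beta> ^^ n) (x + x0 - c) - (\<beta> ^^ n) x0 \<in> W1"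
      using W2(3) by blast
    moreover have "(\<beta> ^^ n) c \<in> W1"
      using n(1) c(1) by (auto simp: V_def)
    moreover have "(\<beta> ^^ n) x = ((\<beta> ^^ n) (x + x0 - c) - (\<beta> ^^ n) x0) + (\<beta> ^^ n) c"
      by (simp only: beta_pow_add[symmetric] beta_pow_diff[symmetric]) simp
    ultimately show "(\<beta> ^^ n) x \<in> W"
      using W1(3) by metis
  qed
qed

lemma beta_minus_id_orbit_sum:
  "\<beta> (\<Sum>r<m. (\<beta> ^^ r) y) - (\<Sum>r<m. (\<beta> ^^ r) y) = (\<beta> ^^ m) y - y"
proof (induction m)
  case (Suc m)
  have "\<beta> (\<Sum>r<Suc m. (\<beta> ^^ r) y) - (\<Sum>r<Suc m. (\<beta> ^^ r) y)
      = (\<beta> (\<Sum>r<m. (\<beta> ^^ r) y) - (\<Sum>r<m. (\<beta> ^^ r) y)) + (\<beta> ((\<beta> ^^ m) y) - (\<beta> ^^ m) y)"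
    by (simp add: beta_add algebra_simps)
  then show ?case
    using Suc by simp
qed simp

lemma solution_from_iteration:
  assumes "compact U" "0 \<in> U" "\<And>w. w \<in> U \<Longrightarrow> z + (\<beta> ^^ m) w \<in> U"
    and "m > 0" "y \<in> N" "\<beta> z - z = y - (\<beta> ^^ m) y"
  shows "\<exists>x\<in>U. \<beta> x - x = y"
proof -
  define t where "t j = ((\<lambda>w. z + (\<beta> ^^ m) w) ^^ j) 0" for j
  have t_in_U: "t j \<in> U" for j
    by (induction j) (simp_all add: t_def assms(2,3))
  have t_solves: "\<beta> (t j) - t j = y - (\<beta> ^^ (j * m)) y" for j
  proof (induction j)
    case (Suc j)
    have "\<beta> (t (Suc j)) - t (Suc j) = (\<beta> z - z) + (\<beta> ^^ m) (\<beta> (t j) - t j)"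
      by (simp add: t_def beta_add beta_pow_add beta_pow_diff funpow_swap1 algebra_simps)
    then show ?case
      using Suc assms(6) by (simp add: beta_pow_diff funpow_add)
  qed (simp add: t_def)
  have "strict_mono (\<lambda>j. j * m)"
    using assms(4) by (simp add: strict_mono_def)
  then have "(\<lambda>j. (\<beta> ^^ (j * m)) y) \<longlonglongrightarrow> 0"
    using LIMSEQ_subseq_LIMSEQ[OF contracts[OF assms(5)]] by (simp add: o_def)
  then have "(\<lambda>j. \<beta> (t j) - t j) \<longlonglongrightarrow> y"
    unfolding t_solves using tendsto_diff[OF tendsto_const[of y]] by fastforce
  moreover have "closed ((\<lambda>x. \<beta> x - x) ` U)"
    using assms(1) continuous_beta
    by (intro compact_imp_closed compact_continuous_image continuous_intros)
      (auto intro: continuous_on_subset)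
  ultimately have "y \<in> (\<lambda>x. \<beta> x - x) ` U"
    using t_in_U by (intro Lim_in_closed_set[of _ "\<lambda>j. \<beta> (t j) - t j"]) auto
  then show ?thesis
    by auto
qed

lemma local_solvability:
  obtains Ob U where "open Ob" "0 \<in> Ob" "compact U" "U \<subseteq> N"
    "\<And>y. y \<in> Ob \<Longrightarrow> y \<in> N \<Longrightarrow> \<exists>x\<in>U. \<beta> x - x = y"
proof -
  obtain O0 K0 :: "'a set" where O0: "open O0" "0 \<in> O0" "compact K0" "O0 \<subseteq> K0"
    using bspec[OF locally_compact[unfolded locally_compact_space_def], of 0] by auto
  define U where "U = K0 \<inter> N"
  have U: "compact U" "U \<subseteq> N" "0 \<in> U"
    using O0 closed_N zero_in_N by (auto simp: U_def)
  obtain V where V: "open V" "0 \<in> V" "\<And>a b. a \<in> V \<Longrightarrow> b \<in> V \<Longrightarrow> a + b \<in> O0"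
    using zero_nhd_add[OF O0(1,2)] by blast
  have "eventually (\<lambda>n. n > 0 \<and> (\<beta> ^^ n) ` U \<subseteq> V) sequentially"
    using uniformly_contracted_on_compact[OF V(1,2) U(1,2)] eventually_gt_at_top eventually_conj
    by blast
  then obtain m where m: "m > 0" "(\<beta> ^^ m) ` U \<subseteq> V"
    unfolding eventually_sequentially by blast
  define T where "T y = - (\<Sum>r<m. (\<beta> ^^ r) y)" for y
  have "open (T -` V)"
    unfolding T_def using V(1) by (intro open_vimage continuous_intros continuous_on_beta_pow)
  moreover have "0 \<in> T -` V"
    using V(2) by (simp add: T_def)
  moreover have "\<exists>x\<in>U. \<beta> x - x = y" if y: "T y \<in> V" "y \<in> N" for y
  proof (rule solution_from_iteration[OF U(1,3) _ m(1) y(2)])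
    have "T y \<in> N"
      unfolding T_def using y(2) by (intro minus_in_N sum_in_N beta_pow_in_N)
    moreover have "(\<beta> ^^ m) w \<in> V \<inter> N" if "w \<in> U" for w
      using that m(2) U(2) beta_pow_in_N by blast
    ultimately show "T y + (\<beta> ^^ m) w \<in> U" if "w \<in> U" for w
      using that y(1) V(3) O0(4) add_in_N by (auto simp: U_def)
    show "\<beta> (T y) - T y = y - (\<beta> ^^ m) y"
      using beta_minus_id_orbit_sum[where m = m and y = y] by (simp add: T_def beta_minus) (metis minus_diff_eq)
  qed
  ultimately show ?thesis
    using that U(1,2) by blast
qed

lemma solution_unique:
  assumes "a \<in> N" "b \<in> N" "\<beta> a - a = \<beta> b - b"
  shows "a = b"
proof -
  have "\<beta> (a - b) = a - b"
    using assms(3) by (simp add: beta_diff algebra_simps)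
  then show ?thesis
    using fixed_point_eq_0[OF diff_in_N[OF assms(1,2)]] by simp
qed

lemma solvable:
  assumes "y \<in> N"
  shows "\<exists>x\<in>N. \<beta> x - x = y"
proof -
  obtain Ob U where Ob: "open Ob" "0 \<in> Ob" and U: "compact U" "U \<subseteq> N"
    and solve: "\<And>y. y \<in> Ob \<Longrightarrow> y \<in> N \<Longrightarrow> \<exists>x\<in>U. \<beta> x - x = y"
    using local_solvability by blast
  obtain n where "(\<beta> ^^ n) y \<in> Ob"
    using eventually_beta_pow_in_nhd[OF assms Ob] unfolding eventually_sequentially by blast
  then obtain x where x: "x \<in> U" "\<beta> x - x = (\<beta> ^^ n) y"
    using solve beta_pow_in_N[OF assms] by blast
  have "\<beta> ((\<gamma> ^^ n) x) - (\<gamma> ^^ n) x = (\<gamma> ^^ n) (\<beta> x - x)"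
    by (simp add: gamma_pow_diff gamma_pow_beta)
  then show ?thesis
    using x U(2) gamma_pow_in_N by (metis gamma_pow_beta_pow subsetD)
qed

lemma continuous_solution:
  obtains \<psi> where "continuous_on N \<psi>" "\<And>y. y \<in> N \<Longrightarrow> \<psi> y \<in> N" "\<And>y. y \<in> N \<Longrightarrow> \<beta> (\<psi> y) - \<psi> y = y"
proof -
  define \<psi> where "\<psi> y = (SOME x. x \<in> N \<and> \<beta> x - x = y)" for y
  have \<psi>: "\<psi> y \<in> N" "\<beta> (\<psi> y) - \<psi> y = y" if "y \<in> N" for y
    using someI_ex[OF solvable[OF that, unfolded Bex_def]] by (simp_all add: \<psi>_def)
  have \<psi>_diff: "\<psi> (y - y') = \<psi> y - \<psi> y'" if "y \<in> N" "y' \<in> N" for y y'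
  proof (rule solution_unique)
    show "\<psi> (y - y') \<in> N" "\<psi> y - \<psi> y' \<in> N"
      using that \<psi>(1) diff_in_N by blast+
    have "\<beta> (\<psi> y - \<psi> y') - (\<psi> y - \<psi> y') = (\<beta> (\<psi> y) - \<psi> y) - (\<beta> (\<psi> y') - \<psi> y')"
      by (simp add: beta_diff)
    then show "\<beta> (\<psi> (y - y')) - \<psi> (y - y') = \<beta> (\<psi> y - \<psi> y') - (\<psi> y - \<psi> y')"
      using that \<psi>(2) diff_in_N by simp
  qed
  have \<psi>_inverse: "\<psi> (\<beta> x - x) = x" if "x \<in> N" for x
  proof -
    have "\<beta> x - x \<in> N"
      using diff_in_N[OF beta_in_N[OF that] that] .
    from \<psi>[OF this] show ?thesis
      using solution_unique[OF _ that] by blast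
  qed
  obtain Ob U where Ob: "open Ob" "0 \<in> Ob" and U: "compact U" "U \<subseteq> N"
    and solve: "\<And>y. y \<in> Ob \<Longrightarrow> y \<in> N \<Longrightarrow> \<exists>x\<in>U. \<beta> x - x = y"
    using local_solvability by blast
  \<comment> \<open>Near \<open>0\<close>, \<open>\<psi>\<close> inverts the continuous injection \<open>\<lambda>x. \<beta> x - x\<close> of the compact set \<open>U\<close>.\<close>
  have "continuous_on ((\<lambda>x. \<beta> x - x) ` U) \<psi>"
  proof (rule continuous_on_inv)
    show "continuous_on U (\<lambda>x. \<beta> x - x)"
      by (intro continuous_intros continuous_on_subset[OF continuous_beta]) auto
    show "\<forall>x\<in>U. \<psi> (\<beta> x - x) = x"
      using U(2) \<psi>_inverse by blast
  qed (rule U(1))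
  moreover have "Ob \<inter> N \<subseteq> (\<lambda>x. \<beta> x - x) ` U"
    using solve by fastforce
  ultimately have "continuous_on (Ob \<inter> N) \<psi>"
    by (rule continuous_on_subset)
  with zero_in_N diff_in_N \<psi>_diff Ob have "continuous_on N \<psi>"
    by (rule continuous_on_subgroup_if_additive)
  then show ?thesis
    using that \<psi> by blast
qed

lemma continuous_solution_for_inverse:
  obtains h where "continuous_on N h" "\<And>y. y \<in> N \<Longrightarrow> h y \<in> N" "\<And>y. y \<in> N \<Longrightarrow> \<gamma> (h y) - h y = y"
proof -
  obtain \<psi> where \<psi>: "continuous_on N \<psi>" "\<And>y. y \<in> N \<Longrightarrow> \<psi> y \<in> N"
    "\<And>y. y \<in> N \<Longrightarrow> \<beta> (\<psi> y) - \<psi> y = y"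
    using continuous_solution by blast
  show ?thesis
  proof
    show "continuous_on N (\<lambda>y. \<beta> (\<psi> (- y)))"
      using minus_in_N by (intro continuous_on_compose2[OF continuous_beta]
          continuous_on_compose2[OF \<psi>(1)] continuous_intros) auto
    show "\<beta> (\<psi> (- y)) \<in> N" if "y \<in> N" for y
      using that \<psi>(2) minus_in_N beta_in_N by blast
    show "\<gamma> (\<beta> (\<psi> (- y))) - \<beta> (\<psi> (- y)) = y" if "y \<in> N" for y
      using \<psi>(3)[OF minus_in_N[OF that]] by (simp add: algebra_simps)
  qed
qed

end

lemma contracted_subgroupI:
  assumes "locally_compact_space (euclidean :: 'a::{topological_ab_group_add, t2_space} topology)"
    and "\<And>x y. \<beta> (x + y) = \<beta> x + \<beta> y" "homeomorphism UNIV UNIV \<beta> \<gamma>"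
    and "closed_submodule \<beta> N" "contracted_by \<beta> N"
  shows "contracted_subgroup \<beta> \<gamma> (N :: 'a set)"
  using assms unfolding contracted_subgroup_def closed_submodule_def contracted_by_def by blast

lemma closed_submodule_inverse:
  assumes "homeomorphism UNIV UNIV \<alpha> \<gamma>" "closed_submodule \<alpha> M"
  shows "closed_submodule \<gamma> M"
proof -
  have "\<gamma> ` M = \<gamma> ` \<alpha> ` M"
    using assms(2) by (simp add: closed_submodule_def)
  also have "\<dots> = M"
    using assms(1) by (simp add: homeomorphism_def image_comp)
  finally show ?thesis
    using assms(2) by (simp add: closed_submodule_def)
qed

theorem mainTheorem5:
  fixes \<alpha> :: "'a::{topological_ab_group_add, t2_space} \<Rightarrow> 'a"
  assumes "LCA_group TYPE('a)"
    and "top_group_aut \<alpha>"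
    and "polycontractable \<alpha>"
  shows "(\<forall>x y. (\<alpha> (x + y) - (x + y)) = (\<alpha> x - x) + (\<alpha> y - y))
       \<and> (\<forall>x. \<alpha> (\<alpha> x - x) = \<alpha> (\<alpha> x) - \<alpha> x)
       \<and> (\<exists>g. homeomorphism UNIV UNIV (\<lambda>x. \<alpha> x - x) g)"
proof -
  have lc: "locally_compact_space (euclidean :: 'a topology)"
    using assms(1) by (simp add: LCA_group_def)
  obtain \<gamma> where add: "\<And>x y. \<alpha> (x + y) = \<alpha> x + \<alpha> y" and hom: "homeomorphism UNIV UNIV \<alpha> \<gamma>"
    using assms(2) unfolding top_group_aut_def by blast
  obtain M1 M2 p1 p2 where M: "closed_submodule \<alpha> M1" "closed_submodule \<alpha> M2"
    "contracted_by \<alpha> M1" "contracted_by (inv \<alpha>) M2" "M1 \<inter> M2 = {0}"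
    and p: "continuous_on UNIV p1" "continuous_on UNIV p2"
      "\<forall>x. p1 x \<in> M1 \<and> p2 x \<in> M2 \<and> x = p1 x + p2 x"
    using assms(3) unfolding polycontractable_def by blast
  have "inv \<alpha> = \<gamma>"
    using hom by (intro inv_equality) (auto simp: homeomorphism_def)
  interpret M1: contracted_subgroup \<alpha> \<gamma> M1
    by (rule contracted_subgroupI[OF lc add hom M(1,3)])
  interpret M2: contracted_subgroup \<gamma> \<alpha> M2
    using M(4) \<open>inv \<alpha> = \<gamma>\<close>
    by (intro contracted_subgroupI[OF lc _ homeomorphism_symD[OF hom] closed_submodule_inverse[OF hom M(2)]])
      (simp_all add: M1.gamma_add)
  obtain \<psi>1 where "continuous_on M1 \<psi>1" "\<And>y. y \<in> M1 \<Longrightarrow> \<alpha> (\<psi>1 y) - \<psi>1 y = y"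
    using M1.continuous_solution by metis
  moreover obtain \<psi>2 where "continuous_on M2 \<psi>2" "\<And>y. y \<in> M2 \<Longrightarrow> \<alpha> (\<psi>2 y) - \<psi>2 y = y"
    using M2.continuous_solution_for_inverse by metis
  moreover have "\<And>x. x \<in> M2 \<Longrightarrow> \<alpha> x = x \<Longrightarrow> x = 0"
    by (metis M2.fixed_point_eq_0 M1.gamma_beta)
  ultimately have "homeomorphism UNIV UNIV (\<lambda>x. \<alpha> x - x) (\<lambda>y. \<psi>1 (p1 y) + \<psi>2 (p2 y))"
    using M1.fixed_point_eq_0
    by (intro homeomorphism_minus_id_of_direct_sum[OF add M1.continuous_beta M(1,2,5) _ _ p]) auto
  then show ?thesis
    by (auto simp: add M1.beta_diff algebra_simps)
qed

end
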